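(* Let $n\ge3$, $p\ge\frac{n+2}{n-2}$, $1\le q<\frac n{n-2}$, and set $\tau=p(n-2)-(n+2)$ and $\alpha=n-q(n-2)$. Let $v\in C^2(H)\cap C^1(\overline H\setminus\{0\})$ satisfy $$\Delta v=|x|^\tau v^p,\quad v>0\ \text{ in } H,\qquad \frac{\partial v}{\partial t}=-\frac{1}{|x|^\alpha}v^q\ \text{ on } \partial H\setminus\{0\}.$$ Then for any $\epsilon$ with $0<\epsilon<\min\{1,\ \min_{\partial B_1^+\cap\partial B_1} v\}$, we have $v(x)\ge \epsilon/2$ for all $x\in\overline{B_1^+}\setminus\{0\}$.
   Context: $H=\{(x',t): x'\in\mathbb{R}^{n-1}, t>0\}$, $\partial H=\{t=0\}$. $B_R=\{x\in\mathbb{R}^n:|x|<R\}$ and $B_R^+=\{x\in H:|x|<R\}$. $\partial v/\partial t$ on $\partial H$ is the derivative in the last variable $t$. *)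

theory Defs
  imports "HOL-Analysis.Analysis"
begin

text \<open>Points of R^n are written (x', t) with x' in an abstract Euclidean space 'a
  of dimension n-1 and t the last coordinate.\<close>

definition upper_half :: "('a::euclidean_space \<times> real) set" where
  "upper_half = {x. snd x > 0}"

definition closed_upper_half :: "('a::euclidean_space \<times> real) set" where
  "closed_upper_half = {x. snd x \<ge> 0}"

definition has_pd :: "('b::real_normed_vector \<Rightarrow> real) \<Rightarrow> 'b \<Rightarrow> 'b \<Rightarrow> bool" where
  "has_pd v e x \<longleftrightarrow> (\<lambda>s. v (x + s *\<^sub>R e)) differentiable (at 0)"

definition pd :: "('b::real_normed_vector \<Rightarrow> real) \<Rightarrow> 'b \<Rightarrow> 'b \<Rightarrow> real" where
  "pd v e x = deriv (\<lambda>s. v (x + s *\<^sub>R e)) 0"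

definition C2_on :: "'b::euclidean_space set \<Rightarrow> ('b \<Rightarrow> real) \<Rightarrow> bool" where
  "C2_on S v \<longleftrightarrow> continuous_on S v \<and>
     (\<forall>e\<in>Basis. (\<forall>x\<in>S. has_pd v e x) \<and> continuous_on S (pd v e) \<and>
        (\<forall>e'\<in>Basis. (\<forall>x\<in>S. has_pd (pd v e) e' x) \<and> continuous_on S (pd (pd v e) e')))"

definition C1_upto :: "'b::euclidean_space set \<Rightarrow> ('b \<Rightarrow> real) \<Rightarrow> bool" where
  "C1_upto T v \<longleftrightarrow> continuous_on T v \<and>
     (\<forall>e\<in>Basis. \<exists>g. continuous_on T g \<and>
        (\<forall>x\<in>interior T. has_pd v e x \<and> pd v e x = g x))"

definition laplacian :: "('b::euclidean_space \<Rightarrow> real) \<Rightarrow> 'b \<Rightarrow> real" where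
  "laplacian v x = (\<Sum>e\<in>Basis. pd (pd v e) e x)"

end

theory Submission
  imports Defs
begin

(*
  Fix z in the closed half ball with z <> 0 and compare v, on the half annulus
  K = {t >= 0, |z|/6 <= |x| <= 1}, with the barrier (N the dimension)
    psi x = eps - eps/(2N) - eps/6 + eps |x|^2/(2N) - (eps/6) (|z|/|x|)^(N-2) + eps t/6,
  for which psi z >= eps/2 and, |x|^(2-N) being harmonic, Delta psi = eps.
  Suppose v - psi attains a negative minimum over K at x0. On the unit sphere v > eps >= psi; on the
  inner sphere psi <= eps - (eps/6) 6^(N-2) <= 0 < v; on the flat part d/dt (v - psi) <= -eps/6 < 0,
  so v - psi decreases into K; and in the interior Delta v >= Delta psi = eps, whereas the equation
  gives Delta v = |x|^tau v^p <= v < psi <= eps. Hence v >= psi on K, and v z >= psi z >= eps/2.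
*)

lemma second_derivative_nonneg_at_local_min:
  fixes f f' :: "real \<Rightarrow> real"
  assumes deriv: "\<forall>\<^sub>F s in nhds 0. (f has_real_derivative f' s) (at s)"
    and deriv2: "(f' has_real_derivative L) (at 0)"
    and min: "\<forall>\<^sub>F s in nhds 0. f 0 \<le> f s"
  shows "0 \<le> L"
proof (rule ccontr)
  assume "\<not> 0 \<le> L"
  obtain d where d: "0 < d"
    and near: "\<And>s. \<bar>s\<bar> < d \<Longrightarrow> (f has_real_derivative f' s) (at s) \<and> f 0 \<le> f s"
    using eventually_conj[OF deriv min] unfolding eventually_nhds_metric dist_real_def by force
  have "f' 0 = 0"
    using DERIV_local_min[OF conjunct1[OF near] d] near d by auto
  then obtain d' where d': "0 < d'" and neg: "\<And>h. 0 < h \<Longrightarrow> h < d' \<Longrightarrow> f' h < 0"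
    using DERIV_neg_dec_right[OF deriv2] \<open>\<not> 0 \<le> L\<close> by auto
  define s where "s = min d d' / 2"
  have s: "0 < s" "s < d" "s < d'"
    using d d' by (auto simp: s_def)
  obtain z where z: "0 < z" "z < s" "f s - f 0 = s * f' z"
    using MVT2[of 0 s f f'] s near by auto
  have "s * f' z < 0"
    using z neg[of z] s by (intro mult_pos_neg) auto
  then have "f s < f 0"
    using z(3) by simp
  with near[of s] s show False
    by simp
qed

lemma right_derivative_nonneg_at_min:
  fixes g :: "real \<Rightarrow> real"
  assumes deriv: "(g has_real_derivative D) (at_right 0)"
    and min: "\<forall>\<^sub>F t in at_right 0. g 0 \<le> g t"
  shows "0 \<le> D"
proof (rule ccontr)
  assume "\<not> 0 \<le> D"
  then obtain d where d: "0 < d" and dec: "\<And>h. 0 < h \<Longrightarrow> h < d \<Longrightarrow> g h < g 0"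
    using has_real_derivative_neg_dec_right[OF deriv] by force
  obtain b where b: "0 < b" and ge: "\<And>t. 0 < t \<Longrightarrow> t < b \<Longrightarrow> g 0 \<le> g t"
    using min unfolding eventually_at_right_field by auto
  have "g (min b d / 2) < g 0" "g 0 \<le> g (min b d / 2)"
    using b d by (auto intro!: dec ge)
  then show False
    by simp
qed

lemma right_derivative_nonneg_at_flat_min:
  fixes w :: "'a::real_normed_vector \<times> real \<Rightarrow> real"
  assumes deriv: "((\<lambda>t. w (y, t)) has_real_derivative D) (at_right 0)"
    and "norm y < R"
    and min: "\<And>t. 0 < t \<Longrightarrow> norm (y, t) < R \<Longrightarrow> w (y, 0) \<le> w (y, t)"
  shows "0 \<le> D"
proof (rule right_derivative_nonneg_at_min[OF deriv])
  have "((\<lambda>t :: real. norm (y, t)) \<longlongrightarrow> norm (y, 0 :: real)) (at_right 0)"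
    by (intro tendsto_norm tendsto_Pair tendsto_const tendsto_ident_at)
  then have "\<forall>\<^sub>F t in at_right (0 :: real). norm (y, t) < R"
    using \<open>norm y < R\<close> by (intro order_tendstoD(2)) auto
  moreover have "\<forall>\<^sub>F t in at_right (0 :: real). 0 < t"
    by (rule eventually_at_right_less)
  ultimately show "\<forall>\<^sub>F t in at_right 0. w (y, 0) \<le> w (y, t)"
    by eventually_elim (rule min)
qed

lemma has_pd_line_derivative:
  assumes "has_pd v e (x + s *\<^sub>R e)"
  shows "((\<lambda>s. v (x + s *\<^sub>R e)) has_real_derivative pd v e (x + s *\<^sub>R e)) (at s)"
proof -
  have "((\<lambda>r. v ((x + s *\<^sub>R e) + r *\<^sub>R e)) has_real_derivative pd v e (x + s *\<^sub>R e)) (at 0)"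
    using assms unfolding has_pd_def pd_def by (simp add: DERIV_deriv_iff_real_differentiable)
  then have "((\<lambda>r. v (x + (r + s) *\<^sub>R e)) has_real_derivative pd v e (x + s *\<^sub>R e)) (at 0)"
    by (simp add: scaleR_add_left algebra_simps)
  then show ?thesis
    using DERIV_shift[of "\<lambda>s. v (x + s *\<^sub>R e)" _ 0 s] by simp
qed

lemma laplacian_ge_at_local_min:
  fixes v \<psi> :: "'b::euclidean_space \<Rightarrow> real"
  assumes U: "open U" "x0 \<in> U"
    and min: "\<And>x. x \<in> U \<Longrightarrow> v x0 - \<psi> x0 \<le> v x - \<psi> x"
    and pd1: "\<And>x e. x \<in> U \<Longrightarrow> e \<in> Basis \<Longrightarrow> has_pd v e x"
    and pd2: "\<And>e. e \<in> Basis \<Longrightarrow> has_pd (pd v e) e x0"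
    and \<psi>1: "\<And>e. e \<in> Basis \<Longrightarrow>
      \<forall>\<^sub>F s in nhds 0. ((\<lambda>s. \<psi> (x0 + s *\<^sub>R e)) has_real_derivative \<psi>' e s) (at s)"
    and \<psi>2: "\<And>e. e \<in> Basis \<Longrightarrow> (\<psi>' e has_real_derivative \<psi>'' e) (at 0)"
  shows "(\<Sum>e\<in>Basis. \<psi>'' e) \<le> laplacian v x0"
  unfolding laplacian_def
proof (rule sum_mono)
  fix e :: 'b
  assume e: "e \<in> Basis"
  have "((\<lambda>s. x0 + s *\<^sub>R e) \<longlongrightarrow> x0) (nhds 0)"
    using tendsto_at_iff_tendsto_nhds[of "\<lambda>s. x0 + s *\<^sub>R e" 0, symmetric]
    by (auto intro!: tendsto_eq_intros)
  then have in_U: "\<forall>\<^sub>F s in nhds 0. x0 + s *\<^sub>R e \<in> U"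
    using U unfolding tendsto_def by auto
  have v2: "((\<lambda>s. pd v e (x0 + s *\<^sub>R e)) has_real_derivative pd (pd v e) e x0) (at 0)"
    using has_pd_line_derivative[of "pd v e" e x0 0] pd2[OF e] by simp
  have "0 \<le> pd (pd v e) e x0 - \<psi>'' e"
  proof (rule second_derivative_nonneg_at_local_min)
    show "\<forall>\<^sub>F s in nhds 0. ((\<lambda>s. v (x0 + s *\<^sub>R e) - \<psi> (x0 + s *\<^sub>R e)) has_real_derivative
        pd v e (x0 + s *\<^sub>R e) - \<psi>' e s) (at s)"
      using in_U \<psi>1[OF e]
      by eventually_elim (intro DERIV_diff has_pd_line_derivative pd1 e)
    show "((\<lambda>s. pd v e (x0 + s *\<^sub>R e) - \<psi>' e s) has_real_derivative pd (pd v e) e x0 - \<psi>'' e) (at 0)"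
      by (rule DERIV_diff[OF v2 \<psi>2[OF e]])
    show "\<forall>\<^sub>F s in nhds 0. v (x0 + 0 *\<^sub>R e) - \<psi> (x0 + 0 *\<^sub>R e) \<le> v (x0 + s *\<^sub>R e) - \<psi> (x0 + s *\<^sub>R e)"
      using in_U by eventually_elim (simp add: min)
  qed
  then show "\<psi>'' e \<le> pd (pd v e) e x0"
    by simp
qed

lemma radial_affine_line_derivatives:
  fixes x0 e l :: "'b::euclidean_space"
  assumes "x0 \<noteq> 0"
    and f: "\<And>a. 0 < a \<Longrightarrow> (f has_real_derivative f' a) (at a)"
    and f': "(f' has_real_derivative f'' (x0 \<bullet> x0)) (at (x0 \<bullet> x0))"
  shows "\<forall>\<^sub>F s in nhds 0.
      ((\<lambda>s. f ((x0 + s *\<^sub>R e) \<bullet> (x0 + s *\<^sub>R e)) + l \<bullet> (x0 + s *\<^sub>R e)) has_real_derivative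
        f' ((x0 + s *\<^sub>R e) \<bullet> (x0 + s *\<^sub>R e)) * (2 * ((x0 + s *\<^sub>R e) \<bullet> e)) + l \<bullet> e) (at s)"
    and "((\<lambda>s. f' ((x0 + s *\<^sub>R e) \<bullet> (x0 + s *\<^sub>R e)) * (2 * ((x0 + s *\<^sub>R e) \<bullet> e)) + l \<bullet> e)
      has_real_derivative f'' (x0 \<bullet> x0) * (2 * (x0 \<bullet> e))\<^sup>2 + 2 * f' (x0 \<bullet> x0) * (e \<bullet> e)) (at 0)"
proof -
  define q where "q s = x0 \<bullet> x0 + 2 * s * (x0 \<bullet> e) + s\<^sup>2 * (e \<bullet> e)" for s
  have q_eq: "(x0 + s *\<^sub>R e) \<bullet> (x0 + s *\<^sub>R e) = q s" for s
    by (simp add: q_def inner_add_left inner_add_right inner_commute[of e x0] power2_eq_square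
        algebra_simps)
  have line_e: "(x0 + s *\<^sub>R e) \<bullet> e = x0 \<bullet> e + s * (e \<bullet> e)" for s
    by (simp add: inner_add_left)
  have l_line: "l \<bullet> (x0 + s *\<^sub>R e) = l \<bullet> x0 + s * (l \<bullet> e)" for s
    by (simp add: inner_add_right)
  have q': "(q has_real_derivative 2 * (x0 \<bullet> e + s * (e \<bullet> e))) (at s)" for s
    unfolding q_def by (auto intro!: derivative_eq_intros simp: algebra_simps)
  have lin': "((\<lambda>s. c + s * d) has_real_derivative d) (at s)" for c d s :: real
    by (auto intro!: derivative_eq_intros)
  have "(q \<longlongrightarrow> q 0) (nhds 0)"
    using DERIV_isCont[OF q'[of 0]] by (simp add: isCont_def tendsto_at_iff_tendsto_nhds)
  moreover have "q 0 > 0"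
    using assms(1) by (simp add: q_def)
  ultimately have "\<forall>\<^sub>F s in nhds 0. q s > 0"
    using order_tendstoD(1) by blast
  then show "\<forall>\<^sub>F s in nhds 0.
      ((\<lambda>s. f ((x0 + s *\<^sub>R e) \<bullet> (x0 + s *\<^sub>R e)) + l \<bullet> (x0 + s *\<^sub>R e)) has_real_derivative
        f' ((x0 + s *\<^sub>R e) \<bullet> (x0 + s *\<^sub>R e)) * (2 * ((x0 + s *\<^sub>R e) \<bullet> e)) + l \<bullet> e) (at s)"
  proof eventually_elim
    case (elim s)
    show ?case
      unfolding q_eq line_e l_line by (rule DERIV_add[OF DERIV_chain2[OF f[OF elim] q'] lin'])
  qed
  have "q 0 = x0 \<bullet> x0"
    by (simp add: q_def)
  then have "((\<lambda>s. f' (q s)) has_real_derivative f'' (q 0) * (2 * (x0 \<bullet> e + 0 * (e \<bullet> e)))) (at 0)"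
    using DERIV_chain2[OF _ q'[of 0], of f'] f' by simp
  from DERIV_add[OF DERIV_mult[OF this DERIV_cmult[OF lin'[of "x0 \<bullet> e" "e \<bullet> e" 0], of 2]]
      DERIV_const[of "l \<bullet> e"]]
  show "((\<lambda>s. f' ((x0 + s *\<^sub>R e) \<bullet> (x0 + s *\<^sub>R e)) * (2 * ((x0 + s *\<^sub>R e) \<bullet> e)) + l \<bullet> e)
      has_real_derivative f'' (x0 \<bullet> x0) * (2 * (x0 \<bullet> e))\<^sup>2 + 2 * f' (x0 \<bullet> x0) * (e \<bullet> e)) (at 0)"
    unfolding q_eq line_e using \<open>q 0 = x0 \<bullet> x0\<close> by (simp add: power2_eq_square algebra_simps)
qed

lemma laplacian_ge_radial_affine_at_local_min:
  fixes v :: "'b::euclidean_space \<Rightarrow> real" and l :: 'b and f f' f'' :: "real \<Rightarrow> real"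
  assumes U: "open U" "x0 \<in> U" and "x0 \<noteq> 0"
    and min: "\<And>x. x \<in> U \<Longrightarrow>
      v x0 - (f (x0 \<bullet> x0) + l \<bullet> x0) \<le> v x - (f (x \<bullet> x) + l \<bullet> x)"
    and pd1: "\<And>x e. x \<in> U \<Longrightarrow> e \<in> Basis \<Longrightarrow> has_pd v e x"
    and pd2: "\<And>e. e \<in> Basis \<Longrightarrow> has_pd (pd v e) e x0"
    and f: "\<And>a. 0 < a \<Longrightarrow> (f has_real_derivative f' a) (at a)"
    and f': "(f' has_real_derivative f'' (x0 \<bullet> x0)) (at (x0 \<bullet> x0))"
  shows "4 * (x0 \<bullet> x0) * f'' (x0 \<bullet> x0) + 2 * real DIM('b) * f' (x0 \<bullet> x0) \<le> laplacian v x0"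
proof -
  have "(\<Sum>e\<in>Basis. f'' (x0 \<bullet> x0) * (2 * (x0 \<bullet> e))\<^sup>2 + 2 * f' (x0 \<bullet> x0) * (e \<bullet> e))
      \<le> laplacian v x0"
  proof (rule laplacian_ge_at_local_min[OF U min pd1 pd2])
    fix e :: 'b
    show "\<forall>\<^sub>F s in nhds 0.
      ((\<lambda>s. f ((x0 + s *\<^sub>R e) \<bullet> (x0 + s *\<^sub>R e)) + l \<bullet> (x0 + s *\<^sub>R e)) has_real_derivative
        f' ((x0 + s *\<^sub>R e) \<bullet> (x0 + s *\<^sub>R e)) * (2 * ((x0 + s *\<^sub>R e) \<bullet> e)) + l \<bullet> e) (at s)"
      using f f' by (rule radial_affine_line_derivatives[OF \<open>x0 \<noteq> 0\<close>, where f' = f'])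
    show "((\<lambda>s. f' ((x0 + s *\<^sub>R e) \<bullet> (x0 + s *\<^sub>R e)) * (2 * ((x0 + s *\<^sub>R e) \<bullet> e)) + l \<bullet> e)
      has_real_derivative f'' (x0 \<bullet> x0) * (2 * (x0 \<bullet> e))\<^sup>2 + 2 * f' (x0 \<bullet> x0) * (e \<bullet> e)) (at 0)"
      using f f' by (rule radial_affine_line_derivatives[OF \<open>x0 \<noteq> 0\<close>, where f' = f'])
  qed
  moreover have "(\<Sum>e\<in>(Basis::'b set). (x0 \<bullet> e)\<^sup>2) = x0 \<bullet> x0"
    by (simp add: euclidean_inner[of x0 x0] power2_eq_square)
  then have "(\<Sum>e\<in>Basis. f'' (x0 \<bullet> x0) * (2 * (x0 \<bullet> e))\<^sup>2 + 2 * f' (x0 \<bullet> x0) * (e \<bullet> e))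
      = 4 * (x0 \<bullet> x0) * f'' (x0 \<bullet> x0) + 2 * real DIM('b) * f' (x0 \<bullet> x0)"
    by (simp add: sum.distrib power_mult_distrib sum_distrib_left[symmetric] algebra_simps)
  ultimately show ?thesis
    by simp
qed

lemma inner_self_powr: "(x \<bullet> x) powr a = norm x powr (2 * a)"
  by (simp add: power2_norm_eq_inner[symmetric] powr_powr[symmetric] powr_numeral)

lemma INF_le_continuous_on_compact:
  fixes f :: "'b::topological_space \<Rightarrow> real"
  assumes "compact S" "continuous_on S f" "x \<in> S"
  shows "(INF y\<in>S. f y) \<le> f x"
  using assms by (intro cINF_lower bounded_imp_bdd_below compact_imp_bounded compact_continuous_image)

lemma compact_upper_half_sphere: "compact {x :: 'a::euclidean_space \<times> real. norm x = 1 \<and> 0 \<le> snd x}"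
proof -
  have "{x :: 'a \<times> real. norm x = 1 \<and> 0 \<le> snd x} = sphere 0 1 \<inter> {x. 0 \<le> snd x}"
    by auto
  moreover have "closed {x :: 'a \<times> real. 0 \<le> snd x}"
    by (intro closed_Collect_le continuous_intros)
  ultimately show ?thesis
    by (simp add: compact_Int_closed)
qed

lemma powr_mult_powr_le_self:
  fixes r u p \<tau> :: real
  assumes "0 \<le> \<tau>" "1 \<le> p" "0 \<le> r" "r \<le> 1" "0 < u" "u \<le> 1"
  shows "r powr \<tau> * u powr p \<le> u"
proof -
  have "r powr \<tau> * u powr p \<le> u powr p"
    using assms by (intro mult_left_le_one_le powr_le1) auto
  also have "u powr p \<le> u powr 1"
    using assms by (intro powr_mono') auto
  finally show ?thesis
    using assms by simp
qed

definition barrier_profile :: "real \<Rightarrow> real \<Rightarrow> real \<Rightarrow> real \<Rightarrow> real" where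
  "barrier_profile N \<epsilon> \<rho> a =
     \<epsilon> - \<epsilon> / (2 * N) - \<epsilon> / 6 + \<epsilon> / (2 * N) * a - \<epsilon> / 6 * \<rho> powr (N - 2) * a powr ((2 - N) / 2)"

definition barrier :: "real \<Rightarrow> real \<Rightarrow> 'a::euclidean_space \<times> real \<Rightarrow> real" where
  "barrier \<epsilon> \<rho> x = barrier_profile DIM('a \<times> real) \<epsilon> \<rho> (x \<bullet> x) + \<epsilon> / 6 * snd x"

lemma barrier_eq_norm:
  fixes x :: "'a::euclidean_space \<times> real"
  defines "N \<equiv> real DIM('a \<times> real)"
  shows "barrier \<epsilon> \<rho> x = \<epsilon> - \<epsilon> / (2 * N) - \<epsilon> / 6 + \<epsilon> / (2 * N) * (norm x)\<^sup>2
    - \<epsilon> / 6 * \<rho> powr (N - 2) / norm x powr (N - 2) + \<epsilon> / 6 * snd x"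
proof -
  have "2 * ((2 - N) / 2) = - (N - 2)"
    by simp
  then have "(x \<bullet> x) powr ((2 - N) / 2) = 1 / norm x powr (N - 2)"
    by (simp only: inner_self_powr powr_minus_divide)
  then show ?thesis
    unfolding barrier_def barrier_profile_def N_def[symmetric] by (simp add: power2_norm_eq_inner)
qed

lemma barrier_le:
  fixes x :: "'a::euclidean_space \<times> real"
  defines "N \<equiv> real DIM('a \<times> real)"
  assumes "0 \<le> \<epsilon>" "norm x \<le> 1"
  shows "barrier \<epsilon> \<rho> x \<le> \<epsilon> - \<epsilon> / 6 * \<rho> powr (N - 2) / norm x powr (N - 2)"
proof -
  have "\<epsilon> / (2 * N) * (norm x)\<^sup>2 \<le> \<epsilon> / (2 * N)"
    using assms by (intro mult_left_le) (auto simp: N_def power_le_one)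
  moreover have "\<epsilon> / 6 * snd x \<le> \<epsilon> / 6"
    using assms norm_snd_le[of "snd x" "fst x"] by (intro mult_left_le) auto
  ultimately show ?thesis
    unfolding barrier_eq_norm N_def by linarith
qed

corollary barrier_le_eps:
  assumes "0 \<le> \<epsilon>" "norm x \<le> 1"
  shows "barrier \<epsilon> \<rho> x \<le> \<epsilon>"
proof -
  have "0 \<le> \<epsilon> / 6 * \<rho> powr (real DIM('a \<times> real) - 2) / norm x powr (real DIM('a \<times> real) - 2)"
    using assms(1) by simp
  with barrier_le[OF assms, of \<rho>] show ?thesis
    by linarith
qed

lemma barrier_ge_half:
  fixes x :: "'a::euclidean_space \<times> real"
  assumes "DIM('a) \<ge> 2" "0 \<le> \<epsilon>" "x \<noteq> 0" "0 \<le> snd x"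
  shows "\<epsilon> / 2 \<le> barrier \<epsilon> (norm x) x"
proof -
  have "\<epsilon> / (2 * real DIM('a \<times> real)) \<le> \<epsilon> / 6"
    using assms by (intro divide_left_mono) auto
  moreover have "0 \<le> \<epsilon> / (2 * real DIM('a \<times> real)) * (norm x)\<^sup>2" "0 \<le> \<epsilon> / 6 * snd x"
    using assms by auto
  moreover have "\<epsilon> / 6 * norm x powr (real DIM('a \<times> real) - 2) / norm x powr (real DIM('a \<times> real) - 2)
      = \<epsilon> / 6"
    using assms by simp
  ultimately show ?thesis
    unfolding barrier_eq_norm by linarith
qed

lemma barrier_nonpos:
  fixes x :: "'a::euclidean_space \<times> real"
  assumes "DIM('a) \<ge> 2" "0 \<le> \<epsilon>" "0 < \<rho>" "\<rho> \<le> 1" "norm x = \<rho> / 6"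
  shows "barrier \<epsilon> \<rho> x \<le> 0"
proof -
  define N where "N = real DIM('a \<times> real)"
  have "\<rho> powr (N - 2) = 6 powr (N - 2) * norm x powr (N - 2)"
    using assms(5) by (simp add: powr_mult[symmetric] mult.commute)
  moreover have "norm x > 0"
    using assms(3,5) by linarith
  ultimately have "\<rho> powr (N - 2) / norm x powr (N - 2) = 6 powr (N - 2)"
    by simp
  also have "\<dots> \<ge> 6 powr 1"
    using assms by (intro powr_mono) (auto simp: N_def)
  finally have "\<epsilon> / 6 * 6 \<le> \<epsilon> / 6 * (\<rho> powr (N - 2) / norm x powr (N - 2))"
    using assms(2) by (intro mult_left_mono) auto
  moreover have "barrier \<epsilon> \<rho> x \<le> \<epsilon> - \<epsilon> / 6 * \<rho> powr (N - 2) / norm x powr (N - 2)"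
    using barrier_le[OF assms(2), of x \<rho>] assms(4,5) unfolding N_def by linarith
  ultimately show ?thesis
    by simp
qed

lemma continuous_on_barrier: "continuous_on (- {0}) (barrier \<epsilon> \<rho>)"
  unfolding barrier_def barrier_profile_def by (intro continuous_intros) auto

lemma barrier_profile_has_derivative:
  assumes "0 < a"
  shows "(barrier_profile N \<epsilon> \<rho> has_real_derivative
    \<epsilon> / (2 * N) - \<epsilon> / 6 * \<rho> powr (N - 2) * ((2 - N) / 2) * a powr ((2 - N) / 2 - 1)) (at a)"
  unfolding barrier_profile_def
  by (rule DERIV_cong[OF DERIV_diff[OF DERIV_add[OF DERIV_const DERIV_cmult[OF DERIV_ident]]
        DERIV_cmult[OF has_real_derivative_powr[OF assms]]]]) simp

lemma barrier_flat_derivative: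
  fixes y :: "'a::euclidean_space"
  assumes "y \<noteq> 0"
  shows "((\<lambda>t. barrier \<epsilon> \<rho> (y, t)) has_real_derivative \<epsilon> / 6) (at 0)"
proof -
  have "0 < y \<bullet> y + 0 * 0"
    using assms by simp
  moreover have "((\<lambda>t. y \<bullet> y + t * t) has_real_derivative 0) (at 0)"
    by (auto intro!: derivative_eq_intros)
  ultimately have "((\<lambda>t. barrier_profile DIM('a \<times> real) \<epsilon> \<rho> (y \<bullet> y + t * t) + \<epsilon> / 6 * t)
      has_real_derivative \<epsilon> / 6) (at 0)"
    by (rule DERIV_cong[OF DERIV_add[OF DERIV_chain2[OF barrier_profile_has_derivative]
          DERIV_cmult[OF DERIV_ident]]]) simp_all
  then show ?thesis
    by (simp add: barrier_def)
qed

lemma laplacian_ge_at_barrier_local_min: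
  fixes v :: "'a::euclidean_space \<times> real \<Rightarrow> real"
  assumes U: "open U" "x0 \<in> U" and "x0 \<noteq> 0"
    and min: "\<And>x. x \<in> U \<Longrightarrow> v x0 - barrier \<epsilon> \<rho> x0 \<le> v x - barrier \<epsilon> \<rho> x"
    and pd1: "\<And>x e. x \<in> U \<Longrightarrow> e \<in> Basis \<Longrightarrow> has_pd v e x"
    and pd2: "\<And>e. e \<in> Basis \<Longrightarrow> has_pd (pd v e) e x0"
  shows "\<epsilon> \<le> laplacian v x0"
proof -
  define N where "N = real DIM('a \<times> real)"
  define k where "k = (2 - N) / 2"
  define c where "c = \<epsilon> / 6 * \<rho> powr (N - 2)"
  define f' where "f' a = \<epsilon> / (2 * N) - c * k * a powr (k - 1)" for a
  define f'' where "f'' a = - c * k * ((k - 1) * a powr (k - 1 - 1))" for a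
  define a where "a = x0 \<bullet> x0"
  have "a > 0"
    using \<open>x0 \<noteq> 0\<close> by (simp add: a_def)
  have "barrier \<epsilon> \<rho> x = barrier_profile N \<epsilon> \<rho> (x \<bullet> x) + (0, \<epsilon> / 6) \<bullet> x" for x :: "'a \<times> real"
    by (cases x) (simp add: barrier_def N_def)
  with min have min': "\<And>x. x \<in> U \<Longrightarrow>
      v x0 - (barrier_profile N \<epsilon> \<rho> (x0 \<bullet> x0) + (0, \<epsilon> / 6) \<bullet> x0)
        \<le> v x - (barrier_profile N \<epsilon> \<rho> (x \<bullet> x) + (0, \<epsilon> / 6) \<bullet> x)"
    by simp
  have "4 * a * f'' a + 2 * N * f' a \<le> laplacian v x0"
    unfolding a_def N_def
  proof (rule laplacian_ge_radial_affine_at_local_min[OF U \<open>x0 \<noteq> 0\<close> min' pd1 pd2])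
    show "(barrier_profile N \<epsilon> \<rho> has_real_derivative f' b) (at b)" if "0 < b" for b
      unfolding f'_def c_def k_def by (rule barrier_profile_has_derivative[OF that])
    show "(f' has_real_derivative f'' (x0 \<bullet> x0)) (at (x0 \<bullet> x0))"
      unfolding f'_def f''_def a_def[symmetric]
      by (rule DERIV_cong[OF DERIV_diff[OF DERIV_const
            DERIV_cmult[OF has_real_derivative_powr[OF \<open>a > 0\<close>]]]]) simp
  qed
  moreover have "4 * a * f'' a + 2 * N * f' a = \<epsilon>"
  proof -
    have "4 * a * f'' a = - 4 * c * k * (k - 1) * (a * a powr (k - 1 - 1))"
      unfolding f''_def by (simp add: algebra_simps)
    also have "a * a powr (k - 1 - 1) = a powr (k - 1)"
      using \<open>a > 0\<close> by (simp add: powr_add[symmetric] powr_mult_base)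
    finally have "4 * a * f'' a = - 4 * c * k * (k - 1) * a powr (k - 1)" .
    moreover have "2 * N * f' a = \<epsilon> - 2 * N * c * k * a powr (k - 1)"
      using DIM_positive[where 'a = "'a \<times> real"] unfolding f'_def N_def
      by (simp add: field_simps del: DIM_positive)
    ultimately have "4 * a * f'' a + 2 * N * f' a
        = \<epsilon> - 2 * c * k * a powr (k - 1) * (2 * (k - 1) + N)"
      by (simp add: algebra_simps)
    moreover have "2 * (k - 1) + N = 0"
      by (simp add: k_def field_simps)
    ultimately show ?thesis
      by simp
  qed
  ultimately show ?thesis
    by simp
qed

lemma barrier_le_on_half_annulus:
  fixes v :: "'a::euclidean_space \<times> real \<Rightarrow> real"
  assumes dim: "DIM('a) \<ge> 2" and \<epsilon>: "0 < \<epsilon>" "\<epsilon> < 1" and \<rho>: "0 < \<rho>" "\<rho> \<le> 1"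
    and cont: "continuous_on (closed_upper_half - {0}) v"
    and pos: "\<And>x. x \<in> upper_half \<Longrightarrow> 0 < v x"
    and pd: "\<And>x e. x \<in> upper_half \<Longrightarrow> e \<in> Basis \<Longrightarrow> has_pd v e x \<and> has_pd (pd v e) e x"
    and lap: "\<And>x. x \<in> upper_half \<Longrightarrow> norm x < 1 \<Longrightarrow> v x < 1 \<Longrightarrow> laplacian v x \<le> v x"
    and flat: "\<And>y. y \<noteq> 0 \<Longrightarrow> \<exists>D \<le> 0. ((\<lambda>t. v (y, t)) has_real_derivative D) (at_right 0)"
    and sphere: "\<And>x. norm x = 1 \<Longrightarrow> 0 \<le> snd x \<Longrightarrow> \<epsilon> < v x"
    and x: "0 \<le> snd x" "\<rho> / 6 \<le> norm x" "norm x \<le> 1"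
  shows "barrier \<epsilon> \<rho> x \<le> v x"
proof -
  define K where "K = {x :: 'a \<times> real. 0 \<le> snd x \<and> \<rho> / 6 \<le> norm x \<and> norm x \<le> 1}"
  define w where "w x = v x - barrier \<epsilon> \<rho> x" for x
  have "K \<subseteq> closed_upper_half - {0}" "K \<subseteq> - {0}"
    using \<rho> by (auto simp: K_def closed_upper_half_def)
  then have "continuous_on K w"
    unfolding w_def
    by (intro continuous_intros continuous_on_subset[OF cont] continuous_on_subset[OF continuous_on_barrier])
  moreover have "compact K"
    unfolding K_def compact_eq_bounded_closed
    by (intro conjI closed_Collect_conj closed_Collect_le continuous_intros
        bounded_subset[OF bounded_cball[of 0 1]]) auto
  moreover have "x \<in> K"
    using x by (simp add: K_def)
  ultimately obtain x0 where "x0 \<in> K" and x0_min: "\<And>x. x \<in> K \<Longrightarrow> w x0 \<le> w x"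
    using continuous_attains_inf[of K w] by blast
  have x0: "0 \<le> snd x0" "\<rho> / 6 \<le> norm x0" "norm x0 \<le> 1" "x0 \<noteq> 0"
    using \<open>x0 \<in> K\<close> \<rho> by (auto simp: K_def)
  have "0 \<le> w x0"
  proof (rule ccontr)
    assume "\<not> 0 \<le> w x0"
    then have "v x0 < barrier \<epsilon> \<rho> x0" "v x0 < \<epsilon>"
      using barrier_le_eps[of \<epsilon> x0 \<rho>] \<epsilon> x0 by (simp_all add: w_def)
    consider (outer) "norm x0 = 1" | (bottom) "snd x0 = 0" "norm x0 < 1"
      | (inner) "norm x0 = \<rho> / 6" "0 < snd x0"
      | (interior) "0 < snd x0" "\<rho> / 6 < norm x0" "norm x0 < 1"
      using x0 by linarith
    then show False
    proof cases
      case outer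
      then show False
        using sphere[OF outer x0(1)] \<open>v x0 < \<epsilon>\<close> by simp
    next
      case bottom
      obtain y where x0_eq: "x0 = (y, 0)"
        using bottom by (cases x0) simp
      with x0 have "y \<noteq> 0"
        by (simp add: zero_prod_def)
      then obtain D where "D \<le> 0" and v_deriv: "((\<lambda>t. v (y, t)) has_real_derivative D) (at_right 0)"
        using flat by blast
      have "((\<lambda>t. w (y, t)) has_real_derivative D - \<epsilon> / 6) (at_right 0)"
        unfolding w_def
        by (rule DERIV_diff[OF v_deriv has_field_derivative_at_within[OF barrier_flat_derivative[OF \<open>y \<noteq> 0\<close>]]])
      then have "0 \<le> D - \<epsilon> / 6"
      proof (rule right_derivative_nonneg_at_flat_min)
        show "norm y < 1"
          using bottom x0_eq by simp
        show "w (y, 0) \<le> w (y, t)" if "0 < t" "norm (y, t) < 1" for t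
        proof -
          have "norm (y, 0 :: real) \<le> norm (y, t)"
            by (simp add: norm_Pair)
          with that x0 x0_eq show ?thesis
            by (intro x0_min[unfolded x0_eq]) (simp add: K_def)
        qed
      qed
      with \<open>D \<le> 0\<close> \<epsilon> show False
        by simp
    next
      case inner
      then have "barrier \<epsilon> \<rho> x0 \<le> 0"
        using barrier_nonpos[OF dim _ \<rho>] \<epsilon> by simp
      moreover have "0 < v x0"
        using inner by (intro pos) (simp add: upper_half_def)
      ultimately show False
        using \<open>v x0 < barrier \<epsilon> \<rho> x0\<close> by simp
    next
      case interior
      define U where "U = {x :: 'a \<times> real. 0 < snd x \<and> \<rho> / 6 < norm x \<and> norm x < 1}"
      have "open U"
        unfolding U_def by (intro open_Collect_conj open_Collect_less continuous_intros)
      have "x0 \<in> U" "U \<subseteq> K" "U \<subseteq> upper_half"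
        using interior by (auto simp: U_def K_def upper_half_def)
      have "\<epsilon> \<le> laplacian v x0"
        using \<open>open U\<close> \<open>x0 \<in> U\<close> \<open>x0 \<noteq> 0\<close>
      proof (rule laplacian_ge_at_barrier_local_min)
        show "v x0 - barrier \<epsilon> \<rho> x0 \<le> v x - barrier \<epsilon> \<rho> x" if "x \<in> U" for x
          using x0_min[of x] that \<open>U \<subseteq> K\<close> by (auto simp: w_def)
        show "has_pd v e x" if "x \<in> U" "e \<in> Basis" for x e
          using pd that \<open>U \<subseteq> upper_half\<close> by blast
        show "has_pd (pd v e) e x0" if "e \<in> Basis" for e
          using pd that \<open>x0 \<in> U\<close> \<open>U \<subseteq> upper_half\<close> by blast
      qed
      moreover have "laplacian v x0 \<le> v x0"
        using \<open>x0 \<in> U\<close> \<open>U \<subseteq> upper_half\<close> interior \<open>v x0 < \<epsilon>\<close> \<epsilon> by (intro lap) auto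
      ultimately show False
        using \<open>v x0 < \<epsilon>\<close> by simp
    qed
  qed
  with x0_min[OF \<open>x \<in> K\<close>] show ?thesis
    by (simp add: w_def)
qed

theorem lemma2p1:
  fixes v :: "('a::euclidean_space \<times> real) \<Rightarrow> real"
    and p q \<epsilon> :: real
  defines "n \<equiv> real (DIM('a)) + 1"
  assumes n3: "DIM('a) \<ge> 2"
    and hp: "p \<ge> (n + 2) / (n - 2)"
    and hq: "1 \<le> q" "q < n / (n - 2)"
    and C2: "C2_on upper_half v"
    and C1: "C1_upto (closed_upper_half - {0}) v"
    and eq: "\<And>x. x \<in> upper_half \<Longrightarrow>
               laplacian v x = norm x powr (p * (n - 2) - (n + 2)) * v x powr p"
    and pos: "\<And>x. x \<in> upper_half \<Longrightarrow> v x > 0"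
    and bdry: "\<And>y. y \<noteq> 0 \<Longrightarrow>
               ((\<lambda>t. v (y, t)) has_real_derivative
                  (- (1 / norm (y, 0::real) powr (n - q * (n - 2))) * v (y, 0) powr q))
               (at_right 0)"
    and eps: "0 < \<epsilon>" "\<epsilon> < 1"
             "\<epsilon> < (INF x\<in>{x. norm x = 1 \<and> snd x \<ge> 0}. v x)"
  shows "\<forall>x. snd x \<ge> 0 \<and> norm x \<le> 1 \<and> x \<noteq> 0 \<longrightarrow> v x \<ge> \<epsilon> / 2"
proof (intro allI impI)
  fix x :: "'a \<times> real"
  assume x: "snd x \<ge> 0 \<and> norm x \<le> 1 \<and> x \<noteq> 0"
  have cont: "continuous_on (closed_upper_half - {0}) v"
    using C1 by (simp add: C1_upto_def)
  have "n \<ge> 3"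
    using n3 by (simp add: n_def)
  then have "1 \<le> (n + 2) / (n - 2)" "p * (n - 2) - (n + 2) \<ge> 0"
    using hp by (simp_all add: pos_divide_le_eq)
  with hp have "p \<ge> 1"
    by linarith
  have "barrier \<epsilon> (norm x) x \<le> v x"
  proof (rule barrier_le_on_half_annulus[OF n3 eps(1,2) _ _ cont pos])
    show "has_pd v e y \<and> has_pd (pd v e) e y" if "y \<in> upper_half" "e \<in> Basis" for y e
      using C2 that by (simp add: C2_on_def)
    show "laplacian v y \<le> v y" if "y \<in> upper_half" "norm y < 1" "v y < 1" for y
      unfolding eq[OF that(1)] using that pos[OF that(1)] \<open>p \<ge> 1\<close> \<open>p * (n - 2) - (n + 2) \<ge> 0\<close>
      by (intro powr_mult_powr_le_self) auto
    \<comment> \<open>Only the sign of the normal derivative enters.\<close>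
    show "\<exists>D \<le> 0. ((\<lambda>t. v (y, t)) has_real_derivative D) (at_right 0)" if "y \<noteq> 0" for y
      using bdry[OF that] by (intro exI conjI) (simp_all add: mult_nonneg_nonneg)
    have "continuous_on {y. norm y = 1 \<and> 0 \<le> snd y} v"
      by (rule continuous_on_subset[OF cont]) (auto simp: closed_upper_half_def)
    then show "\<epsilon> < v y" if "norm y = 1" "0 \<le> snd y" for y
      using eps(3) INF_le_continuous_on_compact[OF compact_upper_half_sphere, of v y] that by simp
  qed (use x in auto)
  moreover have "\<epsilon> / 2 \<le> barrier \<epsilon> (norm x) x"
    using barrier_ge_half[OF n3] eps x by simp
  ultimately show "v x \<ge> \<epsilon> / 2"
    by simp
qed

end
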